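(* Let $\mathcal{G}\in\mathcal{G}_2^{sym}$. Then there exists a sequence $\mathcal{K}_1=\mathcal{G}^{(1)}\rightarrow\mathcal{G}^{(2)}\rightarrow\cdots\rightarrow\mathcal{G}^{(n)}=\mathcal{G}$ of elements of $\mathcal{G}_2^{sym}$ such that for all $2\le i\le n$, $\mathcal{G}^{(i)}$ is obtained from $\mathcal{G}^{(i-1)}$ by a symmetric $2$-tree $j$-extension for some $j\in\{0,1\}$.
   Context: A multi-graph is finite and loop-free, possibly with parallel edges. A $2$-tree decomposition is $(G;T_1,T_2)$ with $G$ a multi-graph and $T_1,T_2$ spanning trees of $G$ whose edge sets partition $E(G)$. Let $\mathbb{Z}_2=\langle s\rangle$. A $\mathbb{Z}_2$-symmetric multi-graph is a pair $(G,\theta)$ with $\theta:\mathbb{Z}_2\to\mathrm{Aut}(G)$ a non-trivial homomorphism; write $s_\theta=\theta(s)$ and for an edge $e=v_1v_2$, $s_\theta(e)=s_\theta(v_1)s_\theta(v_2)$. A vertex $v$ (edge $e$) is fixed if $s_\theta(v)=v$ ($s_\theta(e)=e$). A symmetric $2$-tree decomposition is $(G;T_1,T_2;\theta)$ where $(G;T_1,T_2)$ is a $2$-tree decomposition, $(G,\theta)$ is $\mathbb{Z}_2$-symmetric and $s_\theta(T_i)=T_i$ for $i=1,2$. $\mathcal{G}_2^{sym}$ denotes the set of symmetric $2$-tree decompositions with no fixed edges, together with $\mathcal{K}_1=(K_1;T_1,T_2;\theta)$ where $K_1$ is a single vertex, the $T_i$ are edgeless and $\theta$ is trivial. For $d\in\{1,2\}$: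 $(G',\theta')$ is obtained from $(G,\theta)$ by a symmetric $d$-dimensional $0$-extension if $V(G')=V(G)\cup\{v,s_{\theta'}(v)\}$ with $v,s_{\theta'}(v)\notin V(G)$ distinct, $s_{\theta'}|_{V(G)}=s_\theta$, and $E(G')=E(G)+\{vv_i,s_{\theta'}(vv_i):i=1,\dots,d\}$ for some not necessarily distinct $v_1,\dots,v_d\in V(G)$; it is obtained by a symmetric $d$-dimensional $1$-extension if the first two conditions hold and there are $v_1,\dots,v_{d+1}\in V(G)$ with $e=v_1v_2\in E(G)$ (otherwise not necessarily distinct) such that $E(G')=E(G)-\{e,s_\theta(e)\}+\{vv_i,s_{\theta'}(vv_i):i=1,\dots,d+1\}$. A symmetric $2$-tree decomposition $(G';T_1',T_2';\theta')$ is obtained from $(G;T_1,T_2;\theta)$ by a symmetric $2$-tree $j$-extension ($j\in\{0,1\}$) if $(G',\theta')$ is obtained from $(G,\theta)$ by a symmetric $2$-dimensional $j$-extension and, for $i=1,2$, $(T_i',\theta')$ is obtained from $(T_i,\theta)$ (with the restricted automorphisms) by a symmetric $1$-dimensional $k_i$-extension with the same new vertices, where $k_i\in\{0,1\}$ and $k_1+k_2=j$. *)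

theory Defs
  imports Main "HOL-Library.Multiset"
begin

text \<open>A multi-graph is a finite nonempty vertex set together with a multiset of edges;
an edge is a 2-element vertex set (loop-free; parallel edges = multiplicities).
A 2-tree decomposition is stored as its vertex set, the two spanning trees
(whose multiset sum is the edge multiset of G) and the map s_theta = theta(s).\<close>

record 'v s2td =
  verts :: "'v set"
  tree1 :: "'v set multiset"
  tree2 :: "'v set multiset"
  symm  :: "'v \<Rightarrow> 'v"

definition edges :: "'v s2td \<Rightarrow> 'v set multiset" where
  "edges D = tree1 D + tree2 D"

definition edge_in :: "'v set \<Rightarrow> 'v set \<Rightarrow> bool" where
  "edge_in V e \<longleftrightarrow> (\<exists>a b. a \<noteq> b \<and> a \<in> V \<and> b \<in> V \<and> e = {a, b})"

definition reach :: "'v set multiset \<Rightarrow> 'v \<Rightarrow> 'v \<Rightarrow> bool" where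
  "reach T = (\<lambda>x y. {x, y} \<in># T)\<^sup>*\<^sup>*"

definition connected_on :: "'v set \<Rightarrow> 'v set multiset \<Rightarrow> bool" where
  "connected_on V T \<longleftrightarrow> (\<forall>u\<in>V. \<forall>w\<in>V. reach T u w)"

text \<open>Spanning tree: spanning connected subgraph without cycles, i.e. every edge
(occurrence) is a bridge.\<close>
definition spanning_tree :: "'v set \<Rightarrow> 'v set multiset \<Rightarrow> bool" where
  "spanning_tree V T \<longleftrightarrow>
     (\<forall>e\<in>#T. edge_in V e) \<and> connected_on V T \<and>
     (\<forall>e\<in>#T. \<forall>a b. e = {a, b} \<longrightarrow> \<not> reach (T - {#e#}) a b)"

definition sym_2td :: "'v s2td \<Rightarrow> bool" where
  "sym_2td D \<longleftrightarrow>
     finite (verts D) \<and> verts D \<noteq> {} \<and>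
     spanning_tree (verts D) (tree1 D) \<and> spanning_tree (verts D) (tree2 D) \<and>
     symm D ` verts D \<subseteq> verts D \<and> (\<forall>x\<in>verts D. symm D (symm D x) = x) \<and>
     (\<exists>x\<in>verts D. symm D x \<noteq> x) \<and>
     image_mset (image (symm D)) (tree1 D) = tree1 D \<and>
     image_mset (image (symm D)) (tree2 D) = tree2 D"

definition no_fixed_edges :: "'v s2td \<Rightarrow> bool" where
  "no_fixed_edges D \<longleftrightarrow> (\<forall>e\<in>#edges D. symm D ` e \<noteq> e)"

definition is_K1 :: "'v s2td \<Rightarrow> bool" where
  "is_K1 D \<longleftrightarrow> (\<exists>x. verts D = {x} \<and> tree1 D = {#} \<and> tree2 D = {#} \<and> symm D x = x)"

definition G2sym :: "'v s2td \<Rightarrow> bool" where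
  "G2sym D \<longleftrightarrow> (sym_2td D \<and> no_fixed_edges D) \<or> is_K1 D"

definition new_pair :: "'v s2td \<Rightarrow> 'v s2td \<Rightarrow> 'v \<Rightarrow> bool" where
  "new_pair D D' v \<longleftrightarrow>
     v \<notin> verts D \<and> symm D' v \<notin> verts D \<and> v \<noteq> symm D' v \<and>
     verts D' = verts D \<union> {v, symm D' v} \<and> (\<forall>x\<in>verts D. symm D' x = symm D x)"

definition add_edges :: "('v \<Rightarrow> 'v) \<Rightarrow> 'v \<Rightarrow> 'v list \<Rightarrow> 'v set multiset" where
  "add_edges s v us = mset (concat (map (\<lambda>u. [{v, u}, s ` {v, u}]) us))"

definition sym_ext ::
  "'v set \<Rightarrow> ('v \<Rightarrow> 'v) \<Rightarrow> 'v \<Rightarrow> nat \<Rightarrow> nat \<Rightarrow> 'v set multiset \<Rightarrow> 'v set multiset \<Rightarrow> bool" where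
  "sym_ext V s v d k E E' \<longleftrightarrow>
     (\<exists>us. length us = d + k \<and> set us \<subseteq> V \<and>
        ((k = 0 \<and> E' = E + add_edges s v us) \<or>
         (k = 1 \<and> {us ! 0, us ! 1} \<in># E \<and>
          E' = E - mset_set {{us ! 0, us ! 1}, s ` {us ! 0, us ! 1}} + add_edges s v us)))"

definition two_tree_ext :: "'v s2td \<Rightarrow> 'v s2td \<Rightarrow> nat \<Rightarrow> bool" where
  "two_tree_ext D D' j \<longleftrightarrow> j \<in> {0, 1} \<and>
     (\<exists>v. new_pair D D' v \<and>
        sym_ext (verts D) (symm D') v 2 j (edges D) (edges D') \<and>
        (\<exists>k1 k2. k1 \<in> {0, 1} \<and> k2 \<in> {0, 1} \<and> k1 + k2 = j \<and>
           sym_ext (verts D) (symm D') v 1 k1 (tree1 D) (tree1 D') \<and>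
           sym_ext (verts D) (symm D') v 1 k2 (tree2 D) (tree2 D')))"

end

theory Submission
  imports Defs
begin

text \<open>Induction on the number of vertices. Since \<open>s\<close> fixes no edge, each tree contains at most
  one fixed vertex, and counting degrees gives a moved vertex \<open>v\<close> of total degree at most \<open>3\<close>;
  after possibly exchanging the two trees, \<open>v\<close> is a leaf of the second tree and has degree \<open>1\<close>
  or \<open>2\<close> in the first. Deleting the orbit \<open>{v, s v}\<close>, and in the degree-\<open>2\<close> case joining the
  two neighbours \<open>a, b\<close> of \<open>v\<close> by an edge (and \<open>s a, s b\<close> likewise), gives a smaller
  decomposition of the same kind, from which the given one arises by a symmetric \<open>2\<close>-tree
  \<open>0\<close>- or \<open>1\<close>-extension.\<close>

section \<open>Paths and forests\<close>

lemma reach_refl [simp]: "reach T x x"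
  by (simp add: reach_def)

lemma reach_edge: "{x, y} \<in># T \<Longrightarrow> reach T x y"
  unfolding reach_def by (rule r_into_rtranclp) simp

lemma reach_trans: "reach T x y \<Longrightarrow> reach T y z \<Longrightarrow> reach T x z"
  unfolding reach_def by (rule rtranclp_trans)

lemma reach_sym: "reach T x y \<Longrightarrow> reach T y x"
  unfolding reach_def
proof (induction rule: rtranclp_induct)
  case (step y z)
  have "{z, y} \<in># T" using step(2) by (simp add: insert_commute)
  then show ?case using step(3) by (meson converse_rtranclp_into_rtranclp)
qed simp

lemma reach_doubleton: "reach T c d \<Longrightarrow> {x, y} = {c, d} \<Longrightarrow> reach T x y"
  by (auto simp: doubleton_eq_iff intro: reach_sym)

lemma reach_map:
  assumes "\<And>x y. {x, y} \<in># X \<Longrightarrow> reach Y (f x) (f y)" and "reach X a b"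
  shows "reach Y (f a) (f b)"
  using assms(2) unfolding reach_def
proof (induction rule: rtranclp_induct)
  case (step y z)
  then show ?case using assms(1)[of y z] unfolding reach_def by (meson rtranclp_trans)
qed simp

lemma reach_lift:
  assumes "\<And>x y. {x, y} \<in># X \<Longrightarrow> reach Y x y" and "reach X a b"
  shows "reach Y a b"
  using reach_map[of X Y "\<lambda>x. x" a b] assms by simp

lemma reach_mono: "(\<And>e. e \<in># X \<Longrightarrow> e \<in># Y) \<Longrightarrow> reach X a b \<Longrightarrow> reach Y a b"
  by (rule reach_lift) (auto intro: reach_edge)

lemma reach_split_first_edge:
  assumes "reach T a y"
  shows "y = a \<or> (\<exists>w. {a, w} \<in># T \<and> reach (filter_mset (\<lambda>e. a \<notin> e) T) w y)"
  using assms unfolding reach_def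
proof (induction rule: rtranclp_induct)
  case (step y z)
  show ?case
  proof (cases "z = a \<or> y = a")
    case True then show ?thesis using step(2) by auto
  next
    case False
    with step(3) obtain w where w: "{a, w} \<in># T" "reach (filter_mset (\<lambda>e. a \<notin> e) T) w y"
      unfolding reach_def by auto
    have "{y, z} \<in># filter_mset (\<lambda>e. a \<notin> e) T" using step(2) False by auto
    then have "reach (filter_mset (\<lambda>e. a \<notin> e) T) w z" using w(2) by (blast intro: reach_trans reach_edge)
    then show ?thesis using w(1) unfolding reach_def by blast
  qed
qed simp

lemma edge_inE:
  assumes "edge_in V e"
  obtains a b where "a \<noteq> b" "a \<in> V" "b \<in> V" "e = {a, b}"
  using assms unfolding edge_in_def by blast

lemma edge_in_pair: "edge_in V {x, y} \<Longrightarrow> x \<in> V \<and> y \<in> V \<and> x \<noteq> y"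
  unfolding edge_in_def by (auto simp: doubleton_eq_iff)

lemma edge_in_subset: "edge_in V e \<Longrightarrow> e \<subseteq> V"
  unfolding edge_in_def by auto

lemma edge_in_other_end: "edge_in V e \<Longrightarrow> v \<in> e \<Longrightarrow> \<exists>u. u \<in> V \<and> u \<noteq> v \<and> e = {v, u}"
  unfolding edge_in_def by (auto simp: insert_commute)

definition forest :: "'v set multiset \<Rightarrow> bool" where
  "forest T \<longleftrightarrow> (\<forall>e\<in>#T. \<forall>a b. e = {a, b} \<longrightarrow> \<not> reach (T - {#e#}) a b)"

lemma spanning_tree_iff_forest:
  "spanning_tree V T \<longleftrightarrow> (\<forall>e\<in>#T. edge_in V e) \<and> connected_on V T \<and> forest T"
  unfolding spanning_tree_def forest_def by blast

lemma forestD: "forest T \<Longrightarrow> {a, b} \<in># T \<Longrightarrow> \<not> reach (T - {#{a, b}#}) a b"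
  unfolding forest_def by blast

lemma forest_add_msetD: "forest (add_mset x T) \<Longrightarrow> forest T"
  unfolding forest_def
proof (intro ballI allI impI notI)
  fix e a b assume F: "\<forall>f\<in>#add_mset x T. \<forall>a b. f = {a, b} \<longrightarrow> \<not> reach (add_mset x T - {#f#}) a b"
    and e: "e \<in># T" "e = {a, b}" and r: "reach (T - {#e#}) a b"
  have "reach (add_mset x T - {#e#}) a b"
    by (rule reach_mono[OF _ r]) (simp add: e(1) diff_union_swap2)
  moreover have "e \<in># add_mset x T" using e(1) by simp
  ultimately show False using F[rule_format, of e a b] e(2) by blast
qed

text \<open>In a forest containing the edges \<open>va, vb, wc, wd\<close>, the path \<open>a \<dots> b\<close> through \<open>cd\<close>
  could be rerouted through \<open>c w d\<close> and closed to a cycle with \<open>bv, va\<close>.\<close>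
lemma forest_detour_not_reach:
  assumes F: "forest (M + {#{v, a}, {w, c}, {v, b}, {w, d}#})"
  shows "\<not> reach (M + {#{c, d}#}) a b"
proof
  define T' where "T' = M + {#{w, c}, {v, b}, {w, d}#}"
  assume "reach (M + {#{c, d}#}) a b"
  moreover have "reach T' x y" if "{x, y} \<in># M + {#{c, d}#}" for x y
  proof -
    have "reach T' c w" "reach T' w d" unfolding T'_def by (auto intro: reach_edge reach_sym)
    then have "reach T' c d" by (rule reach_trans)
    then show ?thesis using that unfolding T'_def
      by (auto simp: doubleton_eq_iff intro: reach_edge reach_sym)
  qed
  ultimately have "reach T' a b" by (blast intro: reach_lift)
  moreover have "reach T' b v" unfolding T'_def by (auto intro: reach_edge reach_sym)
  ultimately have "reach T' v a" by (blast intro: reach_trans reach_sym)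
  moreover have "M + {#{v, a}, {w, c}, {v, b}, {w, d}#} - {#{v, a}#} = T'"
    unfolding T'_def by simp
  ultimately show False using forestD[OF F, of v a] by simp
qed

definition components :: "'v set \<Rightarrow> 'v set multiset \<Rightarrow> 'v set set" where
  "components V T = (\<lambda>x. {y\<in>V. reach T x y}) ` V"

lemma card_image_less_if_coarser:
  assumes fin: "finite V" and coarser: "\<And>x y. x \<in> V \<Longrightarrow> y \<in> V \<Longrightarrow> f x = f y \<Longrightarrow> g x = g y"
    and ab: "a \<in> V" "b \<in> V" "f a \<noteq> f b" "g a = g b"
  shows "card (g ` V) < card (f ` V)"
proof -
  define h where "h = (\<lambda>X. g (inv_into V f X))"
  have hf: "h (f x) = g x" if "x \<in> V" for x
  proof -
    have "inv_into V f (f x) \<in> V" "f (inv_into V f (f x)) = f x"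
      using that by (auto intro: inv_into_into f_inv_into_f)
    then show ?thesis unfolding h_def using coarser that by blast
  qed
  have img: "h ` f ` V = g ` V" using hf by (force simp: image_image)
  have "\<not> inj_on h (f ` V)" using ab hf unfolding inj_on_def by auto
  then have "card (h ` f ` V) \<noteq> card (f ` V)" using fin by (simp add: inj_on_iff_eq_card)
  moreover have "card (h ` f ` V) \<le> card (f ` V)" using fin by (simp add: card_image_le)
  ultimately show ?thesis using img by simp
qed

lemma reach_class_eq:
  assumes "reach T x y"
  shows "{z\<in>V. reach T x z} = {z\<in>V. reach T y z}"
  using reach_trans[OF reach_sym[OF assms]] reach_trans[OF assms] by blast

text \<open>Adding an edge of a forest merges two components.\<close>
lemma forest_size_components:
  assumes fin: "finite V" and "\<forall>e\<in>#T. edge_in V e" "forest T"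
  shows "size T + card (components V T) \<le> card V"
  using assms(2,3)
proof (induction T)
  case empty
  then show ?case unfolding components_def using fin by (simp add: card_image_le)
next
  case (add e T)
  have "edge_in V e" using add.prems(1) by simp
  then obtain a b where ab: "a \<noteq> b" "a \<in> V" "b \<in> V" "e = {a, b}" by (rule edge_inE)
  have "forest T" using add.prems(2) by (rule forest_add_msetD)
  then have IH: "size T + card (components V T) \<le> card V" using add.IH add.prems(1) by simp
  have not_ab: "\<not> reach T a b" using forestD[OF add.prems(2), of a b] ab(4) by simp
  have mono: "reach T x y \<Longrightarrow> reach (add_mset e T) x y" for x y
    by (rule reach_mono) auto
  have "card (components V (add_mset e T)) < card (components V T)"
    unfolding components_def
  proof (rule card_image_less_if_coarser[OF fin _ ab(2,3)])
    fix x y assume "x \<in> V" "y \<in> V" and eq: "{z\<in>V. reach T x z} = {z\<in>V. reach T y z}"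
    then have "y \<in> {z\<in>V. reach T x z}" by simp
    then have "reach T x y" by simp
    then show "{z\<in>V. reach (add_mset e T) x z} = {z\<in>V. reach (add_mset e T) y z}"
      by (rule reach_class_eq[OF mono])
  next
    have "b \<in> {z\<in>V. reach T b z}" "b \<notin> {z\<in>V. reach T a z}" using not_ab ab(3) by auto
    then show "{z\<in>V. reach T a z} \<noteq> {z\<in>V. reach T b z}" by metis
    show "{z\<in>V. reach (add_mset e T) a z} = {z\<in>V. reach (add_mset e T) b z}"
      using ab(4) by (simp add: reach_class_eq reach_edge)
  qed
  then show ?case using IH by simp
qed

lemma forest_size_less_card:
  assumes "finite V" "V \<noteq> {}" "\<forall>e\<in>#T. edge_in V e" "forest T"
  shows "size T < card V"
proof -
  have "components V T \<noteq> {}" "finite (components V T)"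
    using assms(1,2) unfolding components_def by auto
  then have "card (components V T) \<ge> 1" by (simp add: Suc_leI card_gt_0_iff)
  then show ?thesis using forest_size_components[OF assms(1,3,4)] by simp
qed

text \<open>Replacing the edges \<open>A\<close> by \<open>B\<close>: the retraction \<open>f\<close> onto \<open>W\<close> maps paths of \<open>T\<close> to paths
  of \<open>T\<^sub>0 + B\<close>, and replacing each edge of \<open>B\<close> by a path in \<open>A\<close> shows that the edges of
  \<open>T\<^sub>0\<close> remain bridges.\<close>
lemma spanning_tree_contract:
  assumes T: "spanning_tree V T" and TA: "T = T\<^sub>0 + A" and WV: "W \<subseteq> V"
    and T\<^sub>0W: "\<forall>e\<in>#T\<^sub>0. edge_in W e" and BW: "\<forall>e\<in>#B. edge_in W e"
    and BA: "\<And>p q. {p, q} \<in># B \<Longrightarrow> reach A p q"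
    and fW: "\<And>w. w \<in> W \<Longrightarrow> f w = w"
    and Af: "\<And>x y. {x, y} \<in># A \<Longrightarrow> reach (T\<^sub>0 + B) (f x) (f y)"
    and Bbridge: "\<And>e p q. e \<in># B \<Longrightarrow> e = {p, q} \<Longrightarrow> \<not> reach (T\<^sub>0 + B - {#e#}) p q"
  shows "spanning_tree W (T\<^sub>0 + B)"
proof -
  have F: "forest T" and con: "connected_on V T" using T unfolding spanning_tree_iff_forest by auto
  have conW: "connected_on W (T\<^sub>0 + B)"
    unfolding connected_on_def
  proof (intro ballI)
    fix x y assume xy: "x \<in> W" "y \<in> W"
    then have r: "reach T x y" using con WV unfolding connected_on_def by auto
    have "reach (T\<^sub>0 + B) (f x) (f y)"
    proof (rule reach_map[OF _ r])
      fix p q assume pq: "{p, q} \<in># T"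
      show "reach (T\<^sub>0 + B) (f p) (f q)"
      proof (cases "{p, q} \<in># T\<^sub>0")
        case True
        then have "p \<in> W" "q \<in> W" using edge_in_pair[OF T\<^sub>0W[rule_format, OF True]] by auto
        then show ?thesis using fW True by (auto intro: reach_edge)
      next
        case False
        then have "{p, q} \<in># A" using pq TA by simp
        then show ?thesis by (rule Af)
      qed
    qed
    then show "reach (T\<^sub>0 + B) x y" using fW xy by simp
  qed
  have "forest (T\<^sub>0 + B)"
    unfolding forest_def
  proof (intro ballI allI impI notI)
    fix e p q assume e: "e \<in># T\<^sub>0 + B" "e = {p, q}" and r: "reach (T\<^sub>0 + B - {#e#}) p q"
    show False
    proof (cases "e \<in># T\<^sub>0")
      case False
      then have "e \<in># B" using e(1) by simp
      then show False using Bbridge e(2) r by blast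
    next
      case True
      have eT: "e \<in># T" using TA True by simp
      have T\<^sub>0B: "T\<^sub>0 + B - {#e#} = (T\<^sub>0 - {#e#}) + B" using True by (simp add: diff_union_swap2)
      have Te: "T - {#e#} = (T\<^sub>0 - {#e#}) + A" using TA True by (simp add: diff_union_swap2)
      have "reach (T - {#e#}) p q"
      proof (rule reach_lift[OF _ r])
        fix x y assume xy: "{x, y} \<in># T\<^sub>0 + B - {#e#}"
        show "reach (T - {#e#}) x y"
        proof (cases "{x, y} \<in># T\<^sub>0 - {#e#}")
          case True then show ?thesis using Te by (auto intro: reach_edge)
        next
          case False
          then have "{x, y} \<in># B" using xy T\<^sub>0B by simp
          then have "reach A x y" by (rule BA)
          then show ?thesis by (rule reach_mono[rotated]) (simp add: Te)
        qed
      qed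
      then show False using forestD[OF F, of p q] eT e(2) by simp
    qed
  qed
  moreover have "\<forall>e\<in>#T\<^sub>0 + B. edge_in W e" using T\<^sub>0W BW by auto
  ultimately show ?thesis unfolding spanning_tree_iff_forest using conW by blast
qed

lemma spanning_tree_remove_leaves:
  assumes T: "spanning_tree V T" and TA: "T = R + {#{v, a}, {w, c}#}" and vw: "v \<noteq> w"
    and W: "W \<subseteq> V" "a \<in> W" "c \<in> W" "v \<notin> W" "w \<notin> W" and R: "\<forall>e\<in>#R. edge_in W e"
  shows "spanning_tree W R"
proof -
  define f where "f x = (if x = v then a else if x = w then c else x)" for x
  have "spanning_tree W (R + {#})"
  proof (rule spanning_tree_contract[where A = "{#{v, a}, {w, c}#}" and f = f])
    fix x y assume "{x, y} \<in># {#{v, a}, {w, c}#}"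
    then have "{x, y} = {v, a} \<or> {x, y} = {w, c}" by simp
    then have "f x = f y" using vw W unfolding f_def by (auto simp: doubleton_eq_iff)
    then show "reach (R + {#}) (f x) (f y)" by simp
  next
    show "spanning_tree V T" "T = R + {#{v, a}, {w, c}#}" "W \<subseteq> V" "\<forall>e\<in>#R. edge_in W e"
      using T TA W(1) R by simp_all
    show "\<And>x. x \<in> W \<Longrightarrow> f x = x" unfolding f_def using W by auto
  qed simp_all
  then show ?thesis by simp
qed

lemma spanning_tree_suppress_two:
  assumes T: "spanning_tree V T" and TA: "T = R + {#{v, a}, {w, c}, {v, b}, {w, d}#}" and vw: "v \<noteq> w"
    and W: "W \<subseteq> V" "a \<in> W" "b \<in> W" "c \<in> W" "d \<in> W" "v \<notin> W" "w \<notin> W"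
    and R: "\<forall>e\<in>#R. edge_in W e"
  shows "spanning_tree W (R + {#{a, b}, {c, d}#})"
proof -
  define A where "A = {#{v, a}, {w, c}, {v, b}, {w, d}#}"
  define B where "B = {#{a, b}, {c, d}#}"
  have "forest T" using T unfolding spanning_tree_iff_forest by blast
  then have F: "forest (R + {#{v, a}, {w, c}, {v, b}, {w, d}#})" using TA by simp
  then have F': "forest (R + {#{w, c}, {v, a}, {w, d}, {v, b}#})" by (simp add: add_mset_commute)
  have no_ab: "\<not> reach (R + {#{c, d}#}) a b" by (rule forest_detour_not_reach[OF F])
  have no_cd: "\<not> reach (R + {#{a, b}#}) c d" by (rule forest_detour_not_reach[OF F'])
  define f where "f x = (if x = v then a else if x = w then c else x)" for x
  show ?thesis
    unfolding B_def[symmetric]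
  proof (rule spanning_tree_contract[where A = A and f = f])
    show "spanning_tree V T" "T = R + A" "W \<subseteq> V" "\<forall>e\<in>#R. edge_in W e"
      using T TA W(1) R unfolding A_def by simp_all
    have "a \<noteq> b" "c \<noteq> d" using no_ab no_cd by auto
    then have "edge_in W {a, b}" "edge_in W {c, d}" unfolding edge_in_def using W(2-5) by blast+
    then show "\<forall>e\<in>#B. edge_in W e" unfolding B_def by simp
    show "\<And>x. x \<in> W \<Longrightarrow> f x = x" unfolding f_def using W(6,7) by auto
  next
    have "reach A a v" "reach A v b" "reach A c w" "reach A w d"
      unfolding A_def by (auto intro: reach_edge reach_sym)
    then have "reach A a b" "reach A c d" by (blast intro: reach_trans)+
    moreover fix p q assume "{p, q} \<in># B"
    then have "{p, q} = {a, b} \<or> {p, q} = {c, d}" unfolding B_def by simp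
    ultimately show "reach A p q" by (metis reach_doubleton)
  next
    have "reach (R + B) a b" "reach (R + B) c d" unfolding B_def by (auto intro: reach_edge)
    moreover fix x y assume "{x, y} \<in># A"
    then have "{x, y} = {v, a} \<or> {x, y} = {w, c} \<or> {x, y} = {v, b} \<or> {x, y} = {w, d}"
      unfolding A_def by simp
    moreover have "f v = a" "f w = c" "f a = a" "f b = b" "f c = c" "f d = d"
      using vw W unfolding f_def by auto
    moreover have "{f x, f y} = {f p, f q}" if "{x, y} = {p, q}" for p q
      using arg_cong[OF that, of "image f"] by simp
    ultimately have "{f x, f y} = {a} \<or> {f x, f y} = {c} \<or> {f x, f y} = {a, b} \<or> {f x, f y} = {c, d}"
      by (metis insert_absorb2)
    with \<open>reach (R + B) a b\<close> \<open>reach (R + B) c d\<close>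
    show "reach (R + B) (f x) (f y)" by (metis reach_refl reach_doubleton insert_absorb2)
  next
    fix e p q assume "e \<in># B" and e: "e = {p, q}"
    then consider "e = {a, b}" | "e = {c, d}" "e \<noteq> {a, b}" unfolding B_def by auto
    then show "\<not> reach (R + B - {#e#}) p q"
    proof cases
      case 1
      then have "R + B - {#e#} = R + {#{c, d}#}" unfolding B_def by simp
      then show ?thesis using no_ab reach_doubleton[of _ p q a b] e 1 by metis
    next
      case 2
      then have "R + B - {#e#} = R + {#{a, b}#}" unfolding B_def by (simp add: diff_add_mset_swap)
      then show ?thesis using no_cd reach_doubleton[of _ p q c d] e 2 by metis
    qed
  qed
qed


section \<open>Degrees\<close>

definition degree :: "'v set multiset \<Rightarrow> 'v \<Rightarrow> nat" where
  "degree T w = size (filter_mset (\<lambda>e. w \<in> e) T)"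

lemma degree_sum:
  assumes fin: "finite V" and "\<forall>e\<in>#T. edge_in V e"
  shows "(\<Sum>w\<in>V. degree T w) = 2 * size T"
  using assms(2)
proof (induction T)
  case empty then show ?case by (simp add: degree_def)
next
  case (add e T)
  have "edge_in V e" using add.prems by simp
  then obtain a b where ab: "a \<noteq> b" "a \<in> V" "b \<in> V" "e = {a, b}" by (rule edge_inE)
  have "(\<Sum>w\<in>V. (if w \<in> e then 1 else 0::nat)) = card (V \<inter> e)"
    using fin by (simp add: sum.If_cases)
  also have "V \<inter> e = {a, b}" using ab by auto
  finally have "(\<Sum>w\<in>V. (if w \<in> e then 1 else 0::nat)) = 2" using ab by simp
  moreover have "degree (add_mset e T) w = degree T w + (if w \<in> e then 1 else 0)" for w
    by (simp add: degree_def)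
  ultimately show ?case using add by (simp add: sum.distrib)
qed

lemma spanning_tree_degree_pos:
  assumes "spanning_tree V T" "w \<in> V" "w' \<in> V" "w \<noteq> w'"
  shows "0 < degree T w"
proof -
  have "reach T w w'" using assms unfolding spanning_tree_def connected_on_def by auto
  then obtain x where "{w, x} \<in># T" using reach_split_first_edge assms(4) by metis
  then have "{w, x} \<in># filter_mset (\<lambda>e. w \<in> e) T" by simp
  then show ?thesis unfolding degree_def by (metis empty_iff gr0I set_mset_empty size_eq_0_iff_empty)
qed

lemma spanning_tree_degree_sum_le:
  assumes "finite V" "V \<noteq> {}" "spanning_tree V T"
  shows "(\<Sum>w\<in>V. degree T w) + 2 \<le> 2 * card V"
proof -
  have E: "\<forall>e\<in>#T. edge_in V e" and F: "forest T"
    using assms(3) unfolding spanning_tree_iff_forest by auto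
  show ?thesis using degree_sum[OF assms(1) E] forest_size_less_card[OF assms(1,2) E F] by linarith
qed

section \<open>Symmetric trees\<close>

definition involution_on :: "'v set \<Rightarrow> ('v \<Rightarrow> 'v) \<Rightarrow> bool" where
  "involution_on V s \<longleftrightarrow> s ` V \<subseteq> V \<and> (\<forall>x\<in>V. s (s x) = x)"

definition sym_tree :: "'v set \<Rightarrow> ('v \<Rightarrow> 'v) \<Rightarrow> 'v set multiset \<Rightarrow> bool" where
  "sym_tree V s T \<longleftrightarrow> spanning_tree V T \<and> image_mset (image s) T = T \<and> (\<forall>e\<in>#T. s ` e \<noteq> e)"

lemma involution_onD: "involution_on V s \<Longrightarrow> x \<in> V \<Longrightarrow> s x \<in> V \<and> s (s x) = x"
  unfolding involution_on_def by blast

lemma sym_tree_edge_in: "sym_tree V s T \<Longrightarrow> e \<in># T \<Longrightarrow> edge_in V e"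
  unfolding sym_tree_def spanning_tree_def by blast

lemma sym_tree_edge_image: "sym_tree V s T \<Longrightarrow> e \<in># T \<Longrightarrow> s ` e \<in># T"
  unfolding sym_tree_def by (metis image_eqI multiset.set_map)

lemma sym_tree_no_fixed_edge: "sym_tree V s T \<Longrightarrow> e \<in># T \<Longrightarrow> s ` e \<noteq> e"
  unfolding sym_tree_def by blast

text \<open>The path between two fixed vertices \<open>a, b\<close> leaves \<open>a\<close> along an edge \<open>aw\<close>; its image leaves
  along \<open>a (s w)\<close>, which is a different edge, and together with the path from \<open>w\<close> to \<open>s w\<close>
  through \<open>b\<close> (avoiding \<open>a\<close>) this closes a cycle.\<close>
lemma sym_tree_fixed_vertex_unique:
  assumes T: "sym_tree V s T" and s: "involution_on V s"
    and ab: "a \<in> V" "b \<in> V" "s a = a" "s b = b"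
  shows "a = b"
proof (rule ccontr)
  assume "a \<noteq> b"
  have E: "\<forall>e\<in>#T. edge_in V e" and F: "forest T" and con: "connected_on V T"
    using T unfolding sym_tree_def spanning_tree_iff_forest by auto
  define Ta where "Ta = filter_mset (\<lambda>e. a \<notin> e) T"
  have "reach T a b" using con ab unfolding connected_on_def by auto
  with \<open>a \<noteq> b\<close> have "\<exists>w. {a, w} \<in># T \<and> reach Ta w b"
    using reach_split_first_edge unfolding Ta_def by metis
  then obtain w where w: "{a, w} \<in># T" and wb: "reach Ta w b" by blast
  have s_Ta: "{s x, s y} \<in># Ta" if "{x, y} \<in># Ta" for x y
  proof -
    have xy: "{x, y} \<in># T" "a \<notin> {x, y}" using that unfolding Ta_def by auto
    have "x \<in> V" "y \<in> V" using edge_in_pair[OF E[rule_format, OF xy(1)]] by simp_all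
    then have "s x \<noteq> a" "s y \<noteq> a" using xy(2) involution_onD[OF s] ab(3) by (metis insertCI)+
    moreover have "s ` {x, y} \<in># T" using sym_tree_edge_image[OF T xy(1)] .
    ultimately show ?thesis unfolding Ta_def by auto
  qed
  have "reach Ta (s w) (s b)" by (rule reach_map[OF reach_edge[OF s_Ta] wb])
  then have "reach Ta w (s w)" using reach_trans[OF wb reach_sym] ab(4) by simp
  moreover have "e \<in># T - {#{a, w}#}" if "e \<in># Ta" for e
    using that unfolding Ta_def by (auto simp: in_diff_count)
  ultimately have w_sw: "reach (T - {#{a, w}#}) w (s w)" using reach_mono by metis
  have "s ` {a, w} = {a, s w}" using ab(3) by auto
  moreover have "s ` {a, w} \<noteq> {a, w}" by (rule sym_tree_no_fixed_edge[OF T w])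
  ultimately have "{a, s w} \<in># T - {#{a, w}#}"
    using sym_tree_edge_image[OF T w] by (auto simp: in_diff_count)
  then have "reach (T - {#{a, w}#}) a w" using reach_trans[OF reach_edge reach_sym[OF w_sw]] by blast
  then show False using forestD[OF F w] by simp
qed

lemma sym_tree_degree_pos:
  assumes T: "sym_tree V s T" and s: "involution_on V s" and v: "v \<in> V" "s v \<noteq> v"
  shows "0 < degree T v"
proof -
  have "spanning_tree V T" using T unfolding sym_tree_def by simp
  then show ?thesis
    using spanning_tree_degree_pos[OF _ v(1) _ v(2)[symmetric]] involution_onD[OF s v(1)] by blast
qed

text \<open>The degrees sum to at most \<open>4 |V| - 4\<close>, every vertex has total degree at least \<open>2\<close>, and at
  most one vertex is fixed.\<close>
lemma moved_vertex_low_degree: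
  assumes fin: "finite V" and s: "involution_on V s" and x: "x \<in> V" "s x \<noteq> x"
    and T\<^sub>1: "sym_tree V s T\<^sub>1" and T\<^sub>2: "sym_tree V s T\<^sub>2"
  obtains v where "v \<in> V" "s v \<noteq> v" "degree T\<^sub>1 v + degree T\<^sub>2 v \<le> 3"
proof -
  define d where "d w = degree T\<^sub>1 w + degree T\<^sub>2 w" for w
  define F where "F = {w\<in>V. s w = w}"
  have FV: "F \<subseteq> V" unfolding F_def by auto
  have "\<forall>a\<in>F. \<forall>b\<in>F. a = b"
    using sym_tree_fixed_vertex_unique[OF T\<^sub>1 s] unfolding F_def by blast
  then have "card F \<le> 1" using finite_subset[OF FV fin] card_le_Suc0_iff_eq by (metis One_nat_def)
  moreover have "card V = card (V - F) + card F"
    using card_Diff_subset[OF finite_subset[OF FV fin] FV] card_mono[OF fin FV] by simp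
  moreover have "(\<Sum>w\<in>V. d w) + 4 \<le> 4 * card V"
  proof -
    have "V \<noteq> {}" using x by auto
    then have "(\<Sum>w\<in>V. degree T w) + 2 \<le> 2 * card V" if "sym_tree V s T" for T
      using spanning_tree_degree_sum_le[OF fin] that unfolding sym_tree_def by blast
    from this[OF T\<^sub>1] this[OF T\<^sub>2] show ?thesis unfolding d_def by (simp add: sum.distrib)
  qed
  moreover have "(\<Sum>w\<in>V. d w) = (\<Sum>w\<in>V - F. d w) + (\<Sum>w\<in>F. d w)"
    using sum.subset_diff[OF FV fin] .
  moreover have "2 * card F \<le> (\<Sum>w\<in>F. d w)"
  proof -
    have "2 \<le> d w" if "w \<in> V" for w
    proof -
      have "\<exists>w'\<in>V. w' \<noteq> w" using x involution_onD[OF s x(1)] by metis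
      then obtain w' where w': "w' \<in> V" "w' \<noteq> w" by blast
      have "spanning_tree V T\<^sub>1" "spanning_tree V T\<^sub>2" using T\<^sub>1 T\<^sub>2 unfolding sym_tree_def by simp_all
      then have "0 < degree T\<^sub>1 w" "0 < degree T\<^sub>2 w"
        using spanning_tree_degree_pos that w' by metis+
      then show ?thesis unfolding d_def by simp
    qed
    then have "(\<Sum>w\<in>F. 2) \<le> (\<Sum>w\<in>F. d w)" using FV by (intro sum_mono) auto
    then show ?thesis by (simp add: mult.commute)
  qed
  ultimately have "(\<Sum>w\<in>V - F. d w) < 4 * card (V - F)" by linarith
  have "\<exists>v\<in>V - F. d v < 4"
  proof (rule ccontr)
    assume "\<not> ?thesis"
    then have "(\<Sum>w\<in>V - F. 4) \<le> (\<Sum>w\<in>V - F. d w)" by (intro sum_mono) (simp add: not_less)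
    then show False using \<open>(\<Sum>w\<in>V - F. d w) < 4 * card (V - F)\<close> by simp
  qed
  then obtain v where "v \<in> V - F" "d v < 4" by blast
  then show thesis using that unfolding F_def d_def by auto
qed

section \<open>Deleting an orbit of vertices\<close>

definition remove_pair :: "('v \<Rightarrow> 'v) \<Rightarrow> 'v \<Rightarrow> 'v set multiset \<Rightarrow> 'v set multiset" where
  "remove_pair s v T = filter_mset (\<lambda>e. v \<notin> e \<and> s v \<notin> e) T"

lemma involution_on_image_mem_iff:
  assumes s: "involution_on V s" and eV: "e \<subseteq> V" and w: "w \<in> V"
  shows "s w \<in> s ` e \<longleftrightarrow> w \<in> e" and "w \<in> s ` e \<longleftrightarrow> s w \<in> e"
proof -
  have inv: "s (s x) = x" if "x \<in> V" for x using involution_onD[OF s that] by simp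
  show "s w \<in> s ` e \<longleftrightarrow> w \<in> e"
  proof
    assume "s w \<in> s ` e"
    then obtain x where "x \<in> e" "s w = s x" by auto
    then show "w \<in> e" using inv[of w] inv[of x] eV w by auto
  qed auto
  show "w \<in> s ` e \<longleftrightarrow> s w \<in> e"
  proof
    assume "w \<in> s ` e"
    then obtain x where "x \<in> e" "w = s x" by auto
    then show "s w \<in> e" using inv eV by auto
  next
    assume "s w \<in> e"
    then have "s (s w) \<in> s ` e" by auto
    then show "w \<in> s ` e" using inv w by simp
  qed
qed

lemma sym_tree_edges_at_image:
  assumes T: "sym_tree V s T" and s: "involution_on V s" and v: "v \<in> V"
  shows "filter_mset (\<lambda>e. s v \<in> e) T = image_mset (image s) (filter_mset (\<lambda>e. v \<in> e) T)"
proof -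
  have "filter_mset (\<lambda>e. s v \<in> s ` e) T = filter_mset (\<lambda>e. v \<in> e) T"
  proof (rule filter_mset_cong[OF refl])
    fix e assume "e \<in># T"
    then have "e \<subseteq> V" by (rule edge_in_subset[OF sym_tree_edge_in[OF T]])
    then show "(s v \<in> s ` e) = (v \<in> e)" by (rule involution_on_image_mem_iff(1)[OF s _ v])
  qed
  moreover have "filter_mset (\<lambda>e. s v \<in> e) T = filter_mset (\<lambda>e. s v \<in> e) (image_mset (image s) T)"
    using T unfolding sym_tree_def by simp
  ultimately show ?thesis by (simp add: filter_mset_image_mset)
qed

lemma sym_tree_remove_pair_image:
  assumes T: "sym_tree V s T" and s: "involution_on V s" and v: "v \<in> V"
  shows "image_mset (image s) (remove_pair s v T) = remove_pair s v T"
proof -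
  have "remove_pair s v T = filter_mset (\<lambda>e. v \<notin> s ` e \<and> s v \<notin> s ` e) T"
    unfolding remove_pair_def
  proof (rule filter_mset_cong[OF refl])
    fix e assume "e \<in># T"
    then have "e \<subseteq> V" by (rule edge_in_subset[OF sym_tree_edge_in[OF T]])
    then show "(v \<notin> e \<and> s v \<notin> e) = (v \<notin> s ` e \<and> s v \<notin> s ` e)"
      using involution_on_image_mem_iff[OF s _ v] by blast
  qed
  then have "image_mset (image s) (remove_pair s v T)
      = image_mset (image s) (filter_mset (\<lambda>e. v \<notin> s ` e \<and> s v \<notin> s ` e) T)" by simp
  also have "\<dots> = filter_mset (\<lambda>e. v \<notin> e \<and> s v \<notin> e) (image_mset (image s) T)"
    by (rule image_mset_filter_mset_swap)
  finally show ?thesis using T unfolding sym_tree_def remove_pair_def by simp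
qed

lemma filter_mset_disj:
  "filter_mset (\<lambda>x. P x \<or> Q x) M = filter_mset P M + filter_mset (\<lambda>x. Q x \<and> \<not> P x) M"
  by (induction M) auto

lemma sym_tree_split_at_pair:
  assumes T: "sym_tree V s T" and s: "involution_on V s" and v: "v \<in> V" "s v \<noteq> v"
  shows "T = remove_pair s v T + filter_mset (\<lambda>e. v \<in> e) T
           + image_mset (image s) (filter_mset (\<lambda>e. v \<in> e) T)"
    and "\<forall>e\<in>#remove_pair s v T. edge_in (V - {v, s v}) e"
    and "{v, u} \<in># T \<Longrightarrow> u \<in> V - {v, s v} \<and> s u \<in> V - {v, s v}"
proof -
  have E: "\<forall>e\<in>#T. edge_in V e" using T unfolding sym_tree_def spanning_tree_def by blast
  have sv: "s v \<in> V" "s (s v) = v" using involution_onD[OF s v(1)] by auto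
  have not_both: "\<not> (s v \<in> e \<and> v \<in> e)" if "e \<in># T" for e
  proof
    assume h: "s v \<in> e \<and> v \<in> e"
    have "edge_in V e" using E that by blast
    then obtain x y where "x \<noteq> y" "x \<in> V" "y \<in> V" "e = {x, y}" by (rule edge_inE)
    then have "e = {v, s v}" using h v(2) by auto
    moreover have "s ` {v, s v} = {v, s v}" using sv by auto
    ultimately show False using sym_tree_no_fixed_edge[OF T that] by simp
  qed
  have "T = filter_mset (\<lambda>e. v \<notin> e \<and> s v \<notin> e) T + filter_mset (\<lambda>e. \<not> (v \<notin> e \<and> s v \<notin> e)) T"
    by (rule multiset_partition)
  also have "filter_mset (\<lambda>e. \<not> (v \<notin> e \<and> s v \<notin> e)) T
      = filter_mset (\<lambda>e. v \<in> e) T + filter_mset (\<lambda>e. s v \<in> e \<and> v \<notin> e) T"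
    using filter_mset_disj[of "\<lambda>e. v \<in> e" "\<lambda>e. s v \<in> e" T] by simp
  also have "filter_mset (\<lambda>e. s v \<in> e \<and> v \<notin> e) T = filter_mset (\<lambda>e. s v \<in> e) T"
    by (rule filter_mset_cong[OF refl]) (use not_both in blast)
  also have "\<dots> = image_mset (image s) (filter_mset (\<lambda>e. v \<in> e) T)"
    by (rule sym_tree_edges_at_image[OF T s v(1)])
  finally show "T = remove_pair s v T + filter_mset (\<lambda>e. v \<in> e) T
      + image_mset (image s) (filter_mset (\<lambda>e. v \<in> e) T)"
    unfolding remove_pair_def by (simp add: add.assoc)
  show "\<forall>e\<in>#remove_pair s v T. edge_in (V - {v, s v}) e"
    using E unfolding remove_pair_def edge_in_def by fastforce
  assume u: "{v, u} \<in># T"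
  have uV: "u \<in> V" "u \<noteq> v" using edge_in_pair[OF E[rule_format, OF u]] by auto
  moreover have "u \<noteq> s v" using not_both[OF u] by auto
  moreover have "s u \<noteq> v" "s u \<noteq> s v" "s u \<in> V"
    using calculation involution_onD[OF s uV(1)] sv by metis+
  ultimately show "u \<in> V - {v, s v} \<and> s u \<in> V - {v, s v}" by auto
qed

lemma sym_tree_remove_pair_sym_tree:
  assumes T: "sym_tree V s T" and s: "involution_on V s" and v: "v \<in> V"
    and sp: "spanning_tree W (remove_pair s v T)"
  shows "sym_tree W s (remove_pair s v T)"
  using sp sym_tree_remove_pair_image[OF T s v] T
  unfolding sym_tree_def remove_pair_def by auto

lemma sym_tree_remove_leaf_pair:
  assumes T: "sym_tree V s T" and s: "involution_on V s" and v: "v \<in> V" "s v \<noteq> v"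
    and d: "degree T v = 1"
  obtains u where "u \<in> V - {v, s v}" "T = remove_pair s v T + {#{v, u}, {s v, s u}#}"
    "sym_tree (V - {v, s v}) s (remove_pair s v T)"
proof -
  note split = sym_tree_split_at_pair[OF T s v]
  have E: "\<forall>e\<in>#T. edge_in V e" using T unfolding sym_tree_def spanning_tree_def by blast
  obtain g where g: "filter_mset (\<lambda>e. v \<in> e) T = {#g#}"
    using d size_1_singleton_mset unfolding degree_def by blast
  then have "g \<in># filter_mset (\<lambda>e. v \<in> e) T" by simp
  then have "g \<in># T" "v \<in> g" by simp_all
  then obtain u where u: "u \<noteq> v" "g = {v, u}"
    using edge_in_other_end[OF E[rule_format, OF \<open>g \<in># T\<close>]] by blast
  have uW: "u \<in> V - {v, s v}" "s u \<in> V - {v, s v}" using split(3) \<open>g \<in># T\<close> u(2) by auto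
  have TA: "T = remove_pair s v T + {#{v, u}, {s v, s u}#}"
    using split(1) g u(2) by (simp add: add_mset_commute)
  have "spanning_tree (V - {v, s v}) (remove_pair s v T)"
  proof (rule spanning_tree_remove_leaves[OF _ TA])
    show "spanning_tree V T" using T unfolding sym_tree_def by simp
  qed (use v(2) uW split(2) in auto)
  then show thesis using that uW(1) TA sym_tree_remove_pair_sym_tree[OF T s v(1)] by simp
qed

text \<open>The new edge \<open>ab\<close> is not fixed by \<open>s\<close>, as otherwise it would be parallel to \<open>(s a)(s b)\<close>.\<close>
lemma sym_tree_suppress_degree2_pair:
  assumes T: "sym_tree V s T" and s: "involution_on V s" and v: "v \<in> V" "s v \<noteq> v"
    and d: "degree T v = 2"
  obtains a b where "a \<in> V - {v, s v}" "b \<in> V - {v, s v}" "s ` {a, b} \<noteq> {a, b}"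
    "T = remove_pair s v T + {#{v, a}, {s v, s a}, {v, b}, {s v, s b}#}"
    "sym_tree (V - {v, s v}) s (remove_pair s v T + {#{a, b}, {s a, s b}#})"
proof -
  note split = sym_tree_split_at_pair[OF T s v]
  define W where "W = V - {v, s v}"
  define R where "R = remove_pair s v T"
  obtain g\<^sub>1 N where "filter_mset (\<lambda>e. v \<in> e) T = add_mset g\<^sub>1 N"
    using d size_eq_Suc_imp_eq_union unfolding degree_def numeral_2_eq_2 by metis
  moreover have "size N = 1" using d calculation unfolding degree_def by simp
  then obtain g\<^sub>2 where "N = {#g\<^sub>2#}" using size_1_singleton_mset by blast
  ultimately have g: "filter_mset (\<lambda>e. v \<in> e) T = {#g\<^sub>1, g\<^sub>2#}" by simp
  then have "g\<^sub>1 \<in># filter_mset (\<lambda>e. v \<in> e) T" "g\<^sub>2 \<in># filter_mset (\<lambda>e. v \<in> e) T" by simp_all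
  then have g\<^sub>1: "g\<^sub>1 \<in># T" "v \<in> g\<^sub>1" and g\<^sub>2: "g\<^sub>2 \<in># T" "v \<in> g\<^sub>2" by simp_all
  obtain a where a: "a \<noteq> v" "g\<^sub>1 = {v, a}"
    using edge_in_other_end[OF sym_tree_edge_in[OF T g\<^sub>1(1)] g\<^sub>1(2)] by blast
  obtain b where b: "b \<noteq> v" "g\<^sub>2 = {v, b}"
    using edge_in_other_end[OF sym_tree_edge_in[OF T g\<^sub>2(1)] g\<^sub>2(2)] by blast
  have aW: "a \<in> W" "s a \<in> W" using split(3) g\<^sub>1(1) a(2) unfolding W_def by auto
  have bW: "b \<in> W" "s b \<in> W" using split(3) g\<^sub>2(1) b(2) unfolding W_def by auto
  define B where "B = {#{a, b}, {s a, s b}#}"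
  have TA: "T = R + {#{v, a}, {s v, s a}, {v, b}, {s v, s b}#}"
    using split(1) g a(2) b(2) unfolding R_def by (simp add: add_mset_commute)
  have sp: "spanning_tree W (R + B)"
    unfolding B_def W_def
  proof (rule spanning_tree_suppress_two[OF _ TA])
    show "spanning_tree V T" using T unfolding sym_tree_def by simp
    show "\<forall>e\<in>#R. edge_in (V - {v, s v}) e" using split(2) unfolding R_def .
  qed (use v(2) aW bW in \<open>auto simp: W_def\<close>)
  have not_fixed: "s ` {a, b} \<noteq> {a, b}"
  proof
    assume "s ` {a, b} = {a, b}"
    then have "B = {#{a, b}, {a, b}#}" unfolding B_def by simp
    moreover have "forest (R + B)"
      using sp unfolding spanning_tree_iff_forest by blast
    ultimately have "\<not> reach (R + {#{a, b}#}) a b" using forestD[of "R + B" a b] by simp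
    then show False by (simp add: reach_edge)
  qed
  have "image_mset (image s) (R + B) = R + B"
    using sym_tree_remove_pair_image[OF T s v(1)] involution_onD[OF s] aW bW
    unfolding R_def B_def W_def by (simp add: add_mset_commute)
  moreover have "\<forall>e\<in>#R + B. s ` e \<noteq> e"
  proof -
    have "s ` {s a, s b} = {a, b}" using involution_onD[OF s] aW bW unfolding W_def by simp
    then have "s ` {s a, s b} \<noteq> {s a, s b}" using not_fixed by auto
    moreover have "s ` e \<noteq> e" if "e \<in># R" for e
      using sym_tree_no_fixed_edge[OF T] that unfolding R_def remove_pair_def by simp
    ultimately show ?thesis using not_fixed unfolding B_def by auto
  qed
  ultimately have "sym_tree W s (R + B)" using sp unfolding sym_tree_def by blast
  then show thesis using that aW(1) bW(1) not_fixed TA unfolding W_def R_def B_def by blast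
qed

section \<open>Symmetric extensions and the reduction\<close>

lemma sym_ext_leaf_pair:
  assumes "u \<in> W" "T = M + {#{v, u}, {s v, s u}#}"
  shows "sym_ext W s v 1 0 M T"
  unfolding sym_ext_def by (rule exI[of _ "[u]"]) (use assms in \<open>simp add: add_edges_def\<close>)

lemma sym_ext_subdivide_pair:
  assumes "a \<in> W" "b \<in> W" "s ` {a, b} \<noteq> {a, b}"
    and T: "T = M + {#{v, a}, {s v, s a}, {v, b}, {s v, s b}#}"
  shows "sym_ext W s v 1 1 (M + {#{a, b}, {s a, s b}#}) T"
  unfolding sym_ext_def
proof (rule exI[of _ "[a, b]"], intro conjI)
  have "{a, b} \<noteq> {s a, s b}" using assms(3) by auto
  then have "mset_set {{a, b}, s ` {a, b}} = {#{a, b}, {s a, s b}#}" by simp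
  then show "1 = 0 \<and> T = M + {#{a, b}, {s a, s b}#} + add_edges s v [a, b] \<or>
    1 = 1 \<and> {[a, b] ! 0, [a, b] ! 1} \<in># M + {#{a, b}, {s a, s b}#} \<and>
    T = M + {#{a, b}, {s a, s b}#} - mset_set {{[a, b] ! 0, [a, b] ! 1}, s ` {[a, b] ! 0, [a, b] ! 1}}
      + add_edges s v [a, b]"
    using T by (simp add: add_edges_def add_mset_commute)
qed (use assms in auto)

lemma sym_ext_nonempty:
  assumes "sym_ext V s v d k E E'" "0 < d"
  shows "V \<noteq> {}"
proof -
  obtain us where "length us = d + k" "set us \<subseteq> V" using assms(1) unfolding sym_ext_def by blast
  then show ?thesis using assms(2) by auto
qed

lemma mset_set_subset_mset: "finite A \<Longrightarrow> A \<subseteq> set_mset M \<Longrightarrow> mset_set A \<subseteq># M"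
  by (meson finite_set_mset mset_set_set_mset_msubset subset_imp_msubset_mset_set subset_mset.order_trans)

text \<open>A symmetric \<open>2\<close>-dimensional extension of \<open>T\<^sub>1 + T\<^sub>2\<close> is obtained by listing the attachment
  vertices of the \<open>1\<close>-dimensional extension of \<open>T\<^sub>1\<close> first; removing the orbit of the
  subdivided edge commutes with adding \<open>T\<^sub>2\<close> because that orbit lies in the invariant \<open>T\<^sub>1\<close>.\<close>
lemma sym_ext_add_leaf_ext:
  assumes e\<^sub>1: "sym_ext V s v 1 k T\<^sub>1 T\<^sub>1'" and e\<^sub>2: "sym_ext V s v 1 0 T\<^sub>2 T\<^sub>2'"
    and inv: "image_mset (image s) T\<^sub>1 = T\<^sub>1"
  shows "sym_ext V s v 2 k (T\<^sub>1 + T\<^sub>2) (T\<^sub>1' + T\<^sub>2')"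
proof -
  obtain us where us: "length us = 1 + k" "set us \<subseteq> V"
    and cases: "(k = 0 \<and> T\<^sub>1' = T\<^sub>1 + add_edges s v us) \<or>
      (k = 1 \<and> {us ! 0, us ! 1} \<in># T\<^sub>1 \<and>
       T\<^sub>1' = T\<^sub>1 - mset_set {{us ! 0, us ! 1}, s ` {us ! 0, us ! 1}} + add_edges s v us)"
    using e\<^sub>1 unfolding sym_ext_def by blast
  obtain u where u: "u \<in> V" "T\<^sub>2' = T\<^sub>2 + add_edges s v [u]"
    using e\<^sub>2 unfolding sym_ext_def by (auto simp: length_Suc_conv)
  have add: "add_edges s v (us @ [u]) = add_edges s v us + add_edges s v [u]"
    unfolding add_edges_def by simp
  show ?thesis
    unfolding sym_ext_def
  proof (intro exI[of _ "us @ [u]"] conjI)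
    show "length (us @ [u]) = 2 + k" "set (us @ [u]) \<subseteq> V" using us u(1) by auto
    from cases show "k = 0 \<and> T\<^sub>1' + T\<^sub>2' = T\<^sub>1 + T\<^sub>2 + add_edges s v (us @ [u]) \<or>
      k = 1 \<and> {(us @ [u]) ! 0, (us @ [u]) ! 1} \<in># T\<^sub>1 + T\<^sub>2 \<and>
      T\<^sub>1' + T\<^sub>2' = T\<^sub>1 + T\<^sub>2 - mset_set {{(us @ [u]) ! 0, (us @ [u]) ! 1},
        s ` {(us @ [u]) ! 0, (us @ [u]) ! 1}} + add_edges s v (us @ [u])"
    proof (elim disjE conjE)
      assume "k = 0" "T\<^sub>1' = T\<^sub>1 + add_edges s v us"
      then show ?thesis using u(2) add by (simp add: ac_simps)
    next
      assume k: "k = 1" and e: "{us ! 0, us ! 1} \<in># T\<^sub>1"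
        and T\<^sub>1': "T\<^sub>1' = T\<^sub>1 - mset_set {{us ! 0, us ! 1}, s ` {us ! 0, us ! 1}} + add_edges s v us"
      let ?X = "mset_set {{us ! 0, us ! 1}, s ` {us ! 0, us ! 1}}"
      have "s ` {us ! 0, us ! 1} \<in># T\<^sub>1" using e inv by (metis image_eqI multiset.set_map)
      then have "{{us ! 0, us ! 1}, s ` {us ! 0, us ! 1}} \<subseteq> set_mset T\<^sub>1" using e by simp
      then have "?X \<subseteq># T\<^sub>1" by (simp add: mset_set_subset_mset)
      then have "T\<^sub>1 + T\<^sub>2 - ?X = (T\<^sub>1 - ?X) + T\<^sub>2" by (rule subset_mset.add_diff_assoc2[symmetric])
      then have "T\<^sub>1' + T\<^sub>2' = T\<^sub>1 + T\<^sub>2 - ?X + add_edges s v (us @ [u])"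
        using T\<^sub>1' u(2) add by (metis add.assoc add.left_commute)
      moreover have "(us @ [u]) ! 0 = us ! 0" "(us @ [u]) ! 1 = us ! 1"
        using us(1) k by (simp_all add: nth_append)
      ultimately show ?thesis using k e by simp
    qed
  qed
qed

lemma sym_tree_reduce_pair:
  assumes T: "sym_tree V s T" and s: "involution_on V s" and v: "v \<in> V" "s v \<noteq> v"
    and d: "degree T v \<le> 2"
  obtains T' where "sym_tree (V - {v, s v}) s T'"
    "sym_ext (V - {v, s v}) s v 1 (degree T v - 1) T' T"
proof -
  have "0 < degree T v" by (rule sym_tree_degree_pos[OF T s v])
  with d consider "degree T v = 1" | "degree T v = 2" by linarith
  then show thesis
  proof cases
    case 1
    then obtain u where u: "u \<in> V - {v, s v}" "T = remove_pair s v T + {#{v, u}, {s v, s u}#}"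
      "sym_tree (V - {v, s v}) s (remove_pair s v T)"
      by (rule sym_tree_remove_leaf_pair[OF T s v])
    show thesis
      by (rule that[OF u(3)]) (use 1 sym_ext_leaf_pair[OF u(1,2)] in simp)
  next
    case 2
    then obtain a b where ab: "a \<in> V - {v, s v}" "b \<in> V - {v, s v}" "s ` {a, b} \<noteq> {a, b}"
      "T = remove_pair s v T + {#{v, a}, {s v, s a}, {v, b}, {s v, s b}#}"
      "sym_tree (V - {v, s v}) s (remove_pair s v T + {#{a, b}, {s a, s b}#})"
      by (rule sym_tree_suppress_degree2_pair[OF T s v])
    show thesis
      by (rule that[OF ab(5)]) (use 2 sym_ext_subdivide_pair[OF ab(1-4)] in simp)
  qed
qed

lemma involution_on_remove_pair:
  assumes "involution_on V s" "v \<in> V"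
  shows "involution_on (V - {v, s v}) s"
proof -
  have "s x \<in> V - {v, s v}" if "x \<in> V - {v, s v}" for x
  proof -
    have x: "x \<in> V" "x \<noteq> v" "x \<noteq> s v" using that by auto
    have "s x \<in> V" "s (s x) = x" "s (s v) = v"
      using involution_onD[OF assms(1) x(1)] involution_onD[OF assms(1) assms(2)] by auto
    moreover have "s x \<noteq> v" using \<open>s (s x) = x\<close> x(3) by auto
    moreover have "s x \<noteq> s v" using \<open>s (s x) = x\<close> \<open>s (s v) = v\<close> x(2) by metis
    ultimately show ?thesis by simp
  qed
  then have "s ` (V - {v, s v}) \<subseteq> V - {v, s v}" by (rule image_subsetI)
  moreover have "\<forall>x\<in>V - {v, s v}. s (s x) = x" using assms(1) unfolding involution_on_def by simp
  ultimately show ?thesis unfolding involution_on_def by blast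
qed

lemma sym_2td_no_fixed_edgesD:
  assumes "sym_2td D" "no_fixed_edges D"
  shows "finite (verts D)" "involution_on (verts D) (symm D)" "\<exists>x\<in>verts D. symm D x \<noteq> x"
    "sym_tree (verts D) (symm D) (tree1 D)" "sym_tree (verts D) (symm D) (tree2 D)"
  using assms unfolding sym_2td_def no_fixed_edges_def edges_def involution_on_def sym_tree_def
  by simp_all

text \<open>If \<open>s\<close> happens to be the identity, the unique fixed vertex is the only vertex.\<close>
lemma G2symI:
  assumes fin: "finite (verts D)" and ne: "verts D \<noteq> {}" and s: "involution_on (verts D) (symm D)"
    and T\<^sub>1: "sym_tree (verts D) (symm D) (tree1 D)" and T\<^sub>2: "sym_tree (verts D) (symm D) (tree2 D)"
  shows "G2sym D"
proof (cases "\<exists>x\<in>verts D. symm D x \<noteq> x")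
  case True
  then have "sym_2td D"
    using assms unfolding sym_2td_def involution_on_def sym_tree_def by simp
  moreover have "no_fixed_edges D"
    using T\<^sub>1 T\<^sub>2 unfolding no_fixed_edges_def edges_def sym_tree_def by auto
  ultimately show ?thesis unfolding G2sym_def by blast
next
  case False
  obtain x where x: "x \<in> verts D" using ne by blast
  then have V: "verts D = {x}"
    using sym_tree_fixed_vertex_unique[OF T\<^sub>1 s] False by blast
  have "T = {#}" if "sym_tree (verts D) (symm D) T" for T
  proof (rule ccontr)
    assume "T \<noteq> {#}"
    then obtain e where "e \<in># T" by blast
    then have "edge_in {x} e" using sym_tree_edge_in[OF that] V by simp
    then show False unfolding edge_in_def by blast
  qed
  then have "is_K1 D" unfolding is_K1_def using V T\<^sub>1 T\<^sub>2 False x by blast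
  then show ?thesis unfolding G2sym_def by blast
qed

lemma G2sym_reduce_leaf_in_tree2:
  assumes D: "sym_2td D" "no_fixed_edges D" and v: "v \<in> verts D" "symm D v \<noteq> v"
    and d: "degree (tree1 D) v \<le> 2" "degree (tree2 D) v = 1"
  obtains R j where "G2sym R" "two_tree_ext R D j" "card (verts R) < card (verts D)"
proof -
  note DD = sym_2td_no_fixed_edgesD[OF D]
  define W where "W = verts D - {v, symm D v}"
  define k where "k = degree (tree1 D) v - 1"
  obtain T\<^sub>1 where T\<^sub>1: "sym_tree W (symm D) T\<^sub>1" "sym_ext W (symm D) v 1 k T\<^sub>1 (tree1 D)"
    using sym_tree_reduce_pair[OF DD(4) DD(2) v d(1)] unfolding W_def k_def .
  obtain T\<^sub>2 where T\<^sub>2: "sym_tree W (symm D) T\<^sub>2" "sym_ext W (symm D) v 1 0 T\<^sub>2 (tree2 D)"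
    using sym_tree_reduce_pair[OF DD(5) DD(2) v] d(2) unfolding W_def by auto
  have k: "k \<in> {0, 1}" using d(1) sym_tree_degree_pos[OF DD(4) DD(2) v] unfolding k_def by auto
  define R where "R = D\<lparr>verts := W, tree1 := T\<^sub>1, tree2 := T\<^sub>2\<rparr>"
  have "G2sym R"
  proof (rule G2symI)
    show "finite (verts R)" using DD(1) unfolding R_def W_def by simp
    show "verts R \<noteq> {}" using sym_ext_nonempty[OF T\<^sub>2(2)] unfolding R_def by simp
    show "involution_on (verts R) (symm R)"
      using involution_on_remove_pair[OF DD(2) v(1)] unfolding R_def W_def by simp
  qed (use T\<^sub>1(1) T\<^sub>2(1) in \<open>simp_all add: R_def\<close>)
  moreover have "two_tree_ext R D k"
    unfolding two_tree_ext_def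
  proof (intro conjI exI)
    show "new_pair R D v"
      using v DD(2) unfolding new_pair_def R_def W_def involution_on_def by auto
    show "sym_ext (verts R) (symm D) v 2 k (edges R) (edges D)"
      using sym_ext_add_leaf_ext[OF T\<^sub>1(2) T\<^sub>2(2)] T\<^sub>1(1) unfolding R_def edges_def sym_tree_def by simp
    show "sym_ext (verts R) (symm D) v 1 k (tree1 R) (tree1 D)"
      "sym_ext (verts R) (symm D) v 1 0 (tree2 R) (tree2 D)"
      using T\<^sub>1(2) T\<^sub>2(2) unfolding R_def by simp_all
  qed (use k in simp_all)
  moreover have "card (verts R) < card (verts D)"
  proof -
    have "W \<subset> verts D" using v(1) unfolding W_def by blast
    then show ?thesis using DD(1) psubset_card_mono unfolding R_def by auto
  qed
  ultimately show thesis using that by blast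
qed

definition swap_trees :: "'v s2td \<Rightarrow> 'v s2td" where
  "swap_trees D = D\<lparr>tree1 := tree2 D, tree2 := tree1 D\<rparr>"

lemma swap_trees_simps [simp]:
  "verts (swap_trees D) = verts D" "symm (swap_trees D) = symm D"
  "tree1 (swap_trees D) = tree2 D" "tree2 (swap_trees D) = tree1 D"
  unfolding swap_trees_def by simp_all

lemma edges_swap_trees [simp]: "edges (swap_trees D) = edges D"
  unfolding edges_def by (simp add: add.commute)

lemma sym_2td_swap_trees: "sym_2td D \<Longrightarrow> sym_2td (swap_trees D)"
  unfolding sym_2td_def by simp

lemma no_fixed_edges_swap_trees: "no_fixed_edges D \<Longrightarrow> no_fixed_edges (swap_trees D)"
  unfolding no_fixed_edges_def by simp

lemma G2sym_swap_trees: "G2sym D \<Longrightarrow> G2sym (swap_trees D)"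
  unfolding G2sym_def is_K1_def using sym_2td_swap_trees no_fixed_edges_swap_trees by auto

lemma two_tree_ext_swap_trees:
  assumes "two_tree_ext R (swap_trees D) j"
  shows "two_tree_ext (swap_trees R) D j"
proof -
  obtain v k\<^sub>1 k\<^sub>2 where "j \<in> {0, 1}" and np: "new_pair R (swap_trees D) v"
    and "sym_ext (verts R) (symm D) v 2 j (edges R) (edges D)"
    and "k\<^sub>1 \<in> {0, 1}" "k\<^sub>2 \<in> {0, 1}" "k\<^sub>1 + k\<^sub>2 = j"
    and "sym_ext (verts R) (symm D) v 1 k\<^sub>1 (tree1 R) (tree2 D)"
    and "sym_ext (verts R) (symm D) v 1 k\<^sub>2 (tree2 R) (tree1 D)"
    using assms unfolding two_tree_ext_def by auto
  moreover have "new_pair (swap_trees R) D v" using np unfolding new_pair_def by simp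
  ultimately show ?thesis unfolding two_tree_ext_def
    by (intro conjI exI[of _ v] exI[of _ k\<^sub>2] exI[of _ k\<^sub>1]) simp_all
qed

lemma G2sym_reduce:
  assumes D: "sym_2td D" "no_fixed_edges D"
  obtains R j where "G2sym R" "two_tree_ext R D j" "card (verts R) < card (verts D)"
proof -
  note DD = sym_2td_no_fixed_edgesD[OF D]
  obtain v where v: "v \<in> verts D" "symm D v \<noteq> v"
    and d: "degree (tree1 D) v + degree (tree2 D) v \<le> 3"
    using moved_vertex_low_degree[OF DD(1,2)] DD(3-5) by metis
  have "0 < degree (tree1 D) v" "0 < degree (tree2 D) v"
    using sym_tree_degree_pos[OF DD(4) DD(2) v] sym_tree_degree_pos[OF DD(5) DD(2) v] by simp_all
  with d consider "degree (tree1 D) v \<le> 2" "degree (tree2 D) v = 1"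
    | "degree (tree2 D) v \<le> 2" "degree (tree1 D) v = 1" by linarith
  then show thesis
  proof cases
    case 1
    then show thesis using G2sym_reduce_leaf_in_tree2[OF D v] that by blast
  next
    case 2
    then obtain R j where "G2sym R" "two_tree_ext R (swap_trees D) j" "card (verts R) < card (verts D)"
      using G2sym_reduce_leaf_in_tree2[OF sym_2td_swap_trees[OF D(1)] no_fixed_edges_swap_trees[OF D(2)]]
        v by auto
    then show thesis
      using that G2sym_swap_trees two_tree_ext_swap_trees by (metis swap_trees_simps(1))
  qed
qed

definition extension_sequence :: "'v s2td list \<Rightarrow> bool" where
  "extension_sequence Gs \<longleftrightarrow>
     (\<forall>i. 0 < i \<and> i < length Gs \<longrightarrow> (\<exists>j\<in>{0, 1}. two_tree_ext (Gs ! (i - 1)) (Gs ! i) j))"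

lemma extension_sequence_snoc:
  assumes "extension_sequence Gs" "Gs \<noteq> []" "two_tree_ext (last Gs) G j"
  shows "extension_sequence (Gs @ [G])"
  unfolding extension_sequence_def
proof (intro allI impI)
  fix i assume i: "0 < i \<and> i < length (Gs @ [G])"
  show "\<exists>j\<in>{0, 1}. two_tree_ext ((Gs @ [G]) ! (i - 1)) ((Gs @ [G]) ! i) j"
  proof (cases "i < length Gs")
    case True
    then have "(Gs @ [G]) ! (i - 1) = Gs ! (i - 1)" "(Gs @ [G]) ! i = Gs ! i"
      by (simp_all add: nth_append)
    then show ?thesis using assms(1) i True unfolding extension_sequence_def by simp
  next
    case False
    then have "i = length Gs" using i by simp
    then have "(Gs @ [G]) ! (i - 1) = last Gs" "(Gs @ [G]) ! i = G"
      using assms(2) by (simp_all add: nth_append last_conv_nth)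
    moreover have "j \<in> {0, 1}" using assms(3) unfolding two_tree_ext_def by blast
    ultimately show ?thesis using assms(3) by auto
  qed
qed

theorem corollary5p7:
  fixes G :: "'v s2td"
  assumes "G2sym G"
  shows "\<exists>Gs. Gs \<noteq> [] \<and> is_K1 (hd Gs) \<and> last Gs = G \<and>
           (\<forall>D\<in>set Gs. G2sym D) \<and>
           (\<forall>i. 0 < i \<and> i < length Gs \<longrightarrow>
              (\<exists>j\<in>{0, 1}. two_tree_ext (Gs ! (i - 1)) (Gs ! i) j))"
  using assms
proof (induction "card (verts G)" arbitrary: G rule: less_induct)
  case less
  show ?case
  proof (cases "is_K1 G")
    case True
    then show ?thesis using less.prems by (intro exI[of _ "[G]"]) simp
  next
    case False
    with less.prems have "sym_2td G" "no_fixed_edges G" unfolding G2sym_def by auto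
    then obtain R j where R: "G2sym R" "two_tree_ext R G j" "card (verts R) < card (verts G)"
      by (rule G2sym_reduce)
    obtain Gs where Gs: "Gs \<noteq> []" "is_K1 (hd Gs)" "last Gs = R" "\<forall>D\<in>set Gs. G2sym D"
      "extension_sequence Gs"
      using less.hyps[OF R(3) R(1)] unfolding extension_sequence_def by blast
    then have "extension_sequence (Gs @ [G])" using R(2) by (intro extension_sequence_snoc) simp_all
    then show ?thesis using Gs less.prems unfolding extension_sequence_def
      by (intro exI[of _ "Gs @ [G]"]) simp
  qed
qed

end
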